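(* Let $\alpha,\beta>-1$ and $n\in\mathbb{N}=\{1,2,\dots\}$, and let $t_1<\dots<t_n$ be the zeros of $P_n^{(\alpha,\beta)}$. Then $$\|p_n^{(\alpha,\beta)}\|_1=\int_{-1}^1|p_n^{(\alpha,\beta)}(t)|\,dt=\frac{4}{n+\alpha+\beta+1}\cdot\frac{n+\alpha+\beta}{2n+\alpha+\beta}\cdot\frac{2n+\alpha+\beta+1}{2n+\alpha+\beta-1}\sum_{m=1}^n(-1)^{m+n}p_{n-1}^{(\alpha,\beta)}(t_m).$$
   Context: The Jacobi polynomials are $P_n^{(\alpha,\beta)}(t)=\sum_{j=0}^n\frac{1}{2^n}\binom{n+\alpha}{n-j}\binom{n+\beta}{j}(t-1)^j(t+1)^{n-j}$. The Jacobi functions on $(-1,1)$ are $p_n^{(\alpha,\beta)}(t)=\frac{(2n+\alpha+\beta+1)\Gamma(n+\alpha+\beta+1)\,n!}{2^{\alpha+\beta+1}\Gamma(n+\alpha+1)\Gamma(n+\beta+1)}(1-t)^{\alpha}(1+t)^{\beta}P_n^{(\alpha,\beta)}(t)$. *)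

theory Defs
  imports "HOL-Analysis.Analysis"
begin

definition jacobiP :: "nat \<Rightarrow> real \<Rightarrow> real \<Rightarrow> real \<Rightarrow> real" where
  "jacobiP n a b t =
     (\<Sum>j=0..n. (1 / 2 ^ n) * ((real n + a) gchoose (n - j)) * ((real n + b) gchoose j)
                 * (t - 1) ^ j * (t + 1) ^ (n - j))"

definition jacobi_fun :: "nat \<Rightarrow> real \<Rightarrow> real \<Rightarrow> real \<Rightarrow> real" where
  "jacobi_fun n a b t =
     ((2 * real n + a + b + 1) * Gamma (real n + a + b + 1) * fact n
        / (2 powr (a + b + 1) * Gamma (real n + a + 1) * Gamma (real n + b + 1)))
     * (1 - t) powr a * (1 + t) powr b * jacobiP n a b t"

end

(*
  For n = m + 1 put F = c * (1 - x)^(a+1) * (1 + x)^(b+1) * P_m^(a+1,b+1) with a suitable constant c: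
  a Rodrigues-type identity makes F an antiderivative of p_n, and F vanishes at -1 and 1.
  Applying Rolle's theorem recursively in (a, b) shows that P_n has n distinct zeros in (-1, 1);
  as P_n has degree n with positive leading coefficient, these are all its zeros, they are simple,
  and p_n has sign (-1)^(k+n) between t_k and t_(k+1). Hence the integral of |p_n| is
  -2 * sum_k (-1)^(k+n) * F(t_k). At a zero of P_n two contiguous relations express
  (1 - x^2) * P_m^(a+1,b+1)(x) through P_m^(a,b)(x), which turns F(t_k) into a multiple of p_(n-1)(t_k).
*)

theory Submission
  imports Defs "HOL-Computational_Algebra.Polynomial" "HOL-Computational_Algebra.Formal_Power_Series"
begin

(* Jacobi polynomials are binary forms in X = (x - 1)/2 and Y = (x + 1)/2 (jacobiP_eq_homog_sum),
   so identities between them reduce to identities between coefficient sequences. *)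
definition homog_sum :: "nat \<Rightarrow> (nat \<Rightarrow> real) \<Rightarrow> real \<Rightarrow> real \<Rightarrow> real" where
  "homog_sum d c X Y = (\<Sum>k=0..d. c k * X ^ k * Y ^ (d - k))"

lemma homog_sum_mult_X:
  "X * homog_sum d c X Y = homog_sum (Suc d) (\<lambda>k. if k = 0 then 0 else c (k - 1)) X Y"
  unfolding homog_sum_def
  by (subst sum.atLeast0_atMost_Suc_shift) (simp add: sum_distrib_left algebra_simps)

lemma homog_sum_mult_Y:
  "Y * homog_sum d c X Y = homog_sum (Suc d) (\<lambda>k. if k \<le> d then c k else 0) X Y"
  unfolding homog_sum_def
  by (subst sum.atLeast0_atMost_Suc) (auto simp: sum_distrib_left Suc_diff_le algebra_simps intro!: sum.cong)

lemma homog_sum_add: "homog_sum d c X Y + homog_sum d c' X Y = homog_sum d (\<lambda>k. c k + c' k) X Y"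
  unfolding homog_sum_def by (simp add: sum.distrib algebra_simps)

lemma homog_sum_diff: "homog_sum d c X Y - homog_sum d c' X Y = homog_sum d (\<lambda>k. c k - c' k) X Y"
  unfolding homog_sum_def by (simp add: sum_subtractf algebra_simps)

lemma homog_sum_scale: "r * homog_sum d c X Y = homog_sum d (\<lambda>k. r * c k) X Y"
  unfolding homog_sum_def by (simp add: sum_distrib_left algebra_simps)

lemma homog_sum_cong: "(\<And>k. k \<le> d \<Longrightarrow> c k = c' k) \<Longrightarrow> homog_sum d c X Y = homog_sum d c' X Y"
  unfolding homog_sum_def by (intro sum.cong) auto

definition homog_sum_deriv :: "nat \<Rightarrow> (nat \<Rightarrow> real) \<Rightarrow> real \<Rightarrow> real \<Rightarrow> real" where
  "homog_sum_deriv d c X Y =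
     (\<Sum>k=0..d. c k * (real k * X ^ (k - 1) * (1/2) * Y ^ (d - k) + X ^ k * (real (d - k) * Y ^ (d - k - 1) * (1/2))))"

lemma has_real_derivative_homog_sum:
  "((\<lambda>x. homog_sum d c ((x - 1) / 2) ((x + 1) / 2)) has_real_derivative
      homog_sum_deriv d c ((x - 1) / 2) ((x + 1) / 2)) (at x)"
  unfolding homog_sum_def homog_sum_deriv_def
  by (rule DERIV_sum, auto intro!: derivative_eq_intros) (simp add: field_simps of_nat_diff)

lemma mult_homog_sum_deriv:
  "X * Y * homog_sum_deriv d c X Y
     = (Y * homog_sum d (\<lambda>k. real k * c k) X Y + X * homog_sum d (\<lambda>k. real (d - k) * c k) X Y) / 2"
proof -
  have X: "real k * X ^ (k - 1) * X = real k * X ^ k" and Y: "real j * Y ^ (j - 1) * Y = real j * Y ^ j"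
    for k j by (cases k, auto) (cases j, auto)
  have summand: "X * Y * (c k * (real k * X ^ (k - 1) * (1/2) * Y ^ (d - k) + X ^ k * (real (d - k) * Y ^ (d - k - 1) * (1/2))))
      = (Y * (real k * c k * X ^ k * Y ^ (d - k)) + X * (real (d - k) * c k * X ^ k * Y ^ (d - k))) / 2" for k
  proof -
    have "X * Y * (c k * (real k * X ^ (k - 1) * (1/2) * Y ^ (d - k) + X ^ k * (real (d - k) * Y ^ (d - k - 1) * (1/2))))
        = c k * ((real k * X ^ (k - 1) * X) * Y ^ (d - k) * Y + X ^ k * X * (real (d - k) * Y ^ (d - k - 1) * Y)) / 2"
      by (simp add: algebra_simps)
    then show ?thesis by (simp only: X Y) (simp add: algebra_simps)
  qed
  then show ?thesis
    unfolding homog_sum_def homog_sum_deriv_def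
    by (simp only: sum_distrib_left summand sum.distrib[symmetric] sum_divide_distrib[symmetric])
qed

lemma diff_mult_gbinomial: "((x::real) - of_nat k) * (x gchoose k) = of_nat (Suc k) * (x gchoose Suc k)"
  using gbinomial_mult_1[of x k] by (simp add: algebra_simps)

lemma gbinomial_deriv_identity:
  fixes p q :: real
  shows "(p - real i) * ((p gchoose i) * (q gchoose Suc j)) + (q - real j) * ((p gchoose Suc i) * (q gchoose j))
           = (real (i + j) + 2) * ((p gchoose Suc i) * (q gchoose Suc j))"
proof -
  have "(p - real i) * (p gchoose i) = (real i + 1) * (p gchoose Suc i)"
    and "(q - real j) * (q gchoose j) = (real j + 1) * (q gchoose Suc j)"
    using diff_mult_gbinomial[of p i] diff_mult_gbinomial[of q j] by simp_all
  then show ?thesis unfolding of_nat_add by algebra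
qed

lemma gbinomial_contiguous_b_identity:
  fixes p q :: real
  shows "(p - real i + (q - real j)) * ((p gchoose i) * ((q + 1) gchoose Suc j))
           = (real (i + j) + 2) * ((p gchoose Suc i) * ((q + 1) gchoose Suc j))
             + (q + 1) * ((p gchoose i) * (q gchoose Suc j) - (p gchoose Suc i) * (q gchoose j))"
proof -
  have "(p - real i) * (p gchoose i) = (real i + 1) * (p gchoose Suc i)"
    using diff_mult_gbinomial[of p i] by simp
  moreover have "(q + 1) * (q gchoose Suc j) = (q - real j) * ((q + 1) gchoose Suc j)"
    using gbinomial_absorb_comp[of "q + 1" "Suc j"] by (simp add: algebra_simps)
  moreover have "(q + 1) * (q gchoose j) = (real j + 1) * ((q + 1) gchoose Suc j)"
    using gbinomial_absorption[of j "q + 1"] by (simp add: algebra_simps)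
  ultimately show ?thesis unfolding of_nat_add by algebra
qed

lemma gbinomial_contiguous_a_identity:
  fixes p q :: real
  shows "(real (i + j) + 2) * ((p gchoose Suc i) * ((q + 1) gchoose Suc j))
           = p * (((p - 1) gchoose i) * (q gchoose Suc j) - ((p - 1) gchoose Suc i) * (q gchoose j))
             + (p + q + 1) * ((p gchoose Suc i) * (q gchoose j))"
proof -
  have "p * ((p - 1) gchoose i) = (real i + 1) * (p gchoose Suc i)"
    using gbinomial_absorption[of i p] by (simp add: algebra_simps)
  moreover have "p * ((p - 1) gchoose Suc i) = (p - real i - 1) * (p gchoose Suc i)"
    using gbinomial_absorb_comp[of p "Suc i"] by (simp add: algebra_simps)
  moreover have "(q + 1) gchoose Suc j = (q gchoose j) + (q gchoose Suc j)"
    by (rule gbinomial_Suc_Suc)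
  moreover have "(q - real j) * (q gchoose j) = (real j + 1) * (q gchoose Suc j)"
    using diff_mult_gbinomial[of q j] by simp
  ultimately show ?thesis unfolding of_nat_add by algebra
qed

lemma nat_le_Suc_cases:
  assumes "k \<le> Suc m"
  obtains "k = 0" | "k = Suc m" | i j where "k = Suc j" "m = Suc (i + j)"
proof (cases k)
  case (Suc j)
  moreover have "m = Suc (m - Suc j + j)" if "j \<noteq> m" using that Suc assms by simp
  ultimately show ?thesis using that by blast
qed (use that in blast)

definition jacobi_coeff :: "nat \<Rightarrow> real \<Rightarrow> real \<Rightarrow> nat \<Rightarrow> real" where
  "jacobi_coeff n a b k = ((real n + a) gchoose (n - k)) * ((real n + b) gchoose k)"

lemma jacobiP_eq_homog_sum:
  "jacobiP n a b x = homog_sum n (jacobi_coeff n a b) ((x - 1) / 2) ((x + 1) / 2)"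
  unfolding jacobiP_def homog_sum_def jacobi_coeff_def
proof (rule sum.cong)
  fix j assume "j \<in> {0..n}"
  then have "(2::real) ^ n = 2 ^ j * 2 ^ (n - j)" by (simp flip: power_add)
  then show "1 / 2 ^ n * ((real n + a) gchoose (n - j)) * ((real n + b) gchoose j) * (x - 1) ^ j * (x + 1) ^ (n - j)
      = ((real n + a) gchoose (n - j)) * ((real n + b) gchoose j) * ((x - 1) / 2) ^ j * ((x + 1) / 2) ^ (n - j)"
    by (simp add: power_divide)
qed simp

(* The guarded terms are the coefficient sequences of X * _ and Y * _ (homog_sum_mult_X/Y). *)
lemma jacobi_coeff_deriv:
  assumes "k \<le> Suc m"
  shows "(if k \<le> m then (a + 1 + real k) * jacobi_coeff m (a + 1) (b + 1) k else 0)
       + (if k = 0 then 0 else (b + 1 + real (m - (k - 1))) * jacobi_coeff m (a + 1) (b + 1) (k - 1))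
       = (real m + 1) * jacobi_coeff (Suc m) a b k"
proof -
  define p q where "p = real m + a + 1" and "q = real m + b + 1"
  have coeff: "jacobi_coeff m (a + 1) (b + 1) l = (p gchoose (m - l)) * (q gchoose l)"
    "jacobi_coeff (Suc m) a b l = (p gchoose (Suc m - l)) * (q gchoose l)" for l
    by (simp_all add: jacobi_coeff_def p_def q_def algebra_simps)
  from assms show ?thesis
  proof (cases rule: nat_le_Suc_cases)
    case 1
    then show ?thesis using diff_mult_gbinomial[of p m] unfolding coeff by (simp add: p_def algebra_simps)
  next
    case 2
    then show ?thesis using diff_mult_gbinomial[of q m] unfolding coeff by (simp add: q_def algebra_simps)
  next
    case (3 i j)
    then show ?thesis using gbinomial_deriv_identity[of p i q j] unfolding coeff by (simp add: p_def q_def algebra_simps)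
  qed
qed

lemma homog_sum_jacobi_deriv:
  "(a + 1) * Y * homog_sum m (jacobi_coeff m (a + 1) (b + 1)) X Y
     + (b + 1) * X * homog_sum m (jacobi_coeff m (a + 1) (b + 1)) X Y
     + Y * homog_sum m (\<lambda>k. real k * jacobi_coeff m (a + 1) (b + 1) k) X Y
     + X * homog_sum m (\<lambda>k. real (m - k) * jacobi_coeff m (a + 1) (b + 1) k) X Y
   = (real m + 1) * homog_sum (Suc m) (jacobi_coeff (Suc m) a b) X Y" (is "?lhs = _")
proof -
  let ?c = "jacobi_coeff m (a + 1) (b + 1)"
  have "?lhs = Y * homog_sum m (\<lambda>k. (a + 1 + real k) * ?c k) X Y
             + X * homog_sum m (\<lambda>k. (b + 1 + real (m - k)) * ?c k) X Y"
    by (simp add: homog_sum_scale homog_sum_add[symmetric] algebra_simps)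
  also have "\<dots> = homog_sum (Suc m) (\<lambda>k. (if k \<le> m then (a + 1 + real k) * ?c k else 0)
       + (if k = 0 then 0 else (b + 1 + real (m - (k - 1))) * ?c (k - 1))) X Y"
    by (simp only: homog_sum_mult_X homog_sum_mult_Y homog_sum_add)
  also have "\<dots> = homog_sum (Suc m) (\<lambda>k. (real m + 1) * jacobi_coeff (Suc m) a b k) X Y"
    by (rule homog_sum_cong) (rule jacobi_coeff_deriv)
  finally show ?thesis by (simp add: homog_sum_scale)
qed

lemma jacobi_coeff_contiguous_b:
  assumes "k \<le> Suc m"
  shows "(real m + a + b + 2) * (if k \<le> m then jacobi_coeff m (a + 1) (b + 1) k else 0)
       = (real m + 1) * jacobi_coeff (Suc m) a b k
       + (real m + 1 + b) * ((if k \<le> m then jacobi_coeff m (a + 1) b k else 0)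
                             - (if k = 0 then 0 else jacobi_coeff m (a + 1) b (k - 1)))"
proof -
  define p q where "p = real m + a + 1" and "q = real m + b"
  have coeff: "jacobi_coeff m (a + 1) (b + 1) l = (p gchoose (m - l)) * ((q + 1) gchoose l)"
    "jacobi_coeff (Suc m) a b l = (p gchoose (Suc m - l)) * ((q + 1) gchoose l)"
    "jacobi_coeff m (a + 1) b l = (p gchoose (m - l)) * (q gchoose l)" for l
    by (simp_all add: jacobi_coeff_def p_def q_def algebra_simps)
  from assms show ?thesis
  proof (cases rule: nat_le_Suc_cases)
    case 1
    then show ?thesis using diff_mult_gbinomial[of p m] unfolding coeff by (simp add: p_def algebra_simps)
  next
    case 2
    then show ?thesis using gbinomial_absorption[of m "q + 1"] unfolding coeff by (simp add: q_def algebra_simps)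
  next
    case (3 i j)
    then show ?thesis
      using gbinomial_contiguous_b_identity[of p i q j] unfolding coeff by (simp add: p_def q_def algebra_simps)
  qed
qed

lemma jacobi_coeff_contiguous_a:
  assumes "k \<le> Suc m"
  shows "(real m + 1) * jacobi_coeff (Suc m) a b k
       = (real m + 1 + a) * ((if k \<le> m then jacobi_coeff m a b k else 0)
                             - (if k = 0 then 0 else jacobi_coeff m a b (k - 1)))
       + (2 * real m + 2 + a + b) * (if k = 0 then 0 else jacobi_coeff m (a + 1) b (k - 1))"
proof -
  define p q where "p = real m + a + 1" and "q = real m + b"
  have coeff: "jacobi_coeff m a b l = ((p - 1) gchoose (m - l)) * (q gchoose l)"
    "jacobi_coeff (Suc m) a b l = (p gchoose (Suc m - l)) * ((q + 1) gchoose l)"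
    "jacobi_coeff m (a + 1) b l = (p gchoose (m - l)) * (q gchoose l)" for l
    by (simp_all add: jacobi_coeff_def p_def q_def algebra_simps)
  from assms show ?thesis
  proof (cases rule: nat_le_Suc_cases)
    case 1
    then show ?thesis using gbinomial_absorption[of m p] unfolding coeff by (simp add: p_def algebra_simps)
  next
    case 2
    then show ?thesis using gbinomial_absorption[of m "q + 1"] unfolding coeff by (simp add: q_def algebra_simps)
  next
    case (3 i j)
    then show ?thesis
      using gbinomial_contiguous_a_identity[of i j p q] unfolding coeff by (simp add: p_def q_def algebra_simps)
  qed
qed

lemma jacobiP_contiguous_b:
  "(real m + a + b + 2) * ((x + 1) / 2) * jacobiP m (a + 1) (b + 1) x
     = (real m + 1) * jacobiP (Suc m) a b x + (real m + 1 + b) * jacobiP m (a + 1) b x"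
proof -
  define X Y where "X = (x - 1) / 2" and "Y = (x + 1) / 2"
  have "(real m + a + b + 2) * (Y * homog_sum m (jacobi_coeff m (a + 1) (b + 1)) X Y)
      = (real m + 1) * homog_sum (Suc m) (jacobi_coeff (Suc m) a b) X Y
      + (real m + 1 + b) * (Y * homog_sum m (jacobi_coeff m (a + 1) b) X Y - X * homog_sum m (jacobi_coeff m (a + 1) b) X Y)"
    unfolding homog_sum_mult_X homog_sum_mult_Y homog_sum_scale homog_sum_diff homog_sum_add
    by (rule homog_sum_cong) (rule jacobi_coeff_contiguous_b)
  moreover have "Y * r - X * r = r" for r
    unfolding X_def Y_def by (simp add: field_simps)
  ultimately show ?thesis
    unfolding jacobiP_eq_homog_sum X_def[symmetric] Y_def[symmetric] by (simp add: ac_simps)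
qed

lemma jacobiP_contiguous_a:
  "(real m + 1) * jacobiP (Suc m) a b x
     = (real m + 1 + a) * jacobiP m a b x + (2 * real m + 2 + a + b) * ((x - 1) / 2) * jacobiP m (a + 1) b x"
proof -
  define X Y where "X = (x - 1) / 2" and "Y = (x + 1) / 2"
  have "(real m + 1) * homog_sum (Suc m) (jacobi_coeff (Suc m) a b) X Y
      = (real m + 1 + a) * (Y * homog_sum m (jacobi_coeff m a b) X Y - X * homog_sum m (jacobi_coeff m a b) X Y)
      + (2 * real m + 2 + a + b) * (X * homog_sum m (jacobi_coeff m (a + 1) b) X Y)"
    unfolding homog_sum_mult_X homog_sum_mult_Y homog_sum_scale homog_sum_diff homog_sum_add
    by (rule homog_sum_cong) (rule jacobi_coeff_contiguous_a)
  moreover have "Y * r - X * r = r" for r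
    unfolding X_def Y_def by (simp add: field_simps)
  ultimately show ?thesis
    unfolding jacobiP_eq_homog_sum X_def[symmetric] Y_def[symmetric] by (simp add: ac_simps)
qed

lemma jacobiP_shift_at_zero_of_Suc:
  assumes "jacobiP (Suc m) a b x = 0"
  shows "(real m + a + b + 2) * (2 * real m + 2 + a + b) * ((1 - x) * (1 + x) * jacobiP m (a + 1) (b + 1) x)
           = 4 * (real m + 1 + a) * (real m + 1 + b) * jacobiP m a b x"
proof -
  have B: "(real m + a + b + 2) * ((x + 1) / 2) * jacobiP m (a + 1) (b + 1) x = (real m + 1 + b) * jacobiP m (a + 1) b x"
    using jacobiP_contiguous_b[of m a b x] assms by simp
  have "0 = (real m + 1 + a) * jacobiP m a b x + (2 * real m + 2 + a + b) * ((x - 1) / 2) * jacobiP m (a + 1) b x"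
    using jacobiP_contiguous_a[of m a b x] assms by simp
  then have A: "(2 * real m + 2 + a + b) * ((x - 1) / 2) * jacobiP m (a + 1) b x = - (real m + 1 + a) * jacobiP m a b x"
    by linarith
  have "(real m + a + b + 2) * (2 * real m + 2 + a + b) * ((1 - x) * (1 + x) * jacobiP m (a + 1) (b + 1) x)
      = -4 * (2 * real m + 2 + a + b) * ((x - 1) / 2) * ((real m + a + b + 2) * ((x + 1) / 2) * jacobiP m (a + 1) (b + 1) x)"
    by (simp add: field_simps)
  also have "\<dots> = -4 * (real m + 1 + b) * ((2 * real m + 2 + a + b) * ((x - 1) / 2) * jacobiP m (a + 1) b x)"
    unfolding B by (simp only: mult_ac)
  also have "\<dots> = 4 * (real m + 1 + a) * (real m + 1 + b) * jacobiP m a b x"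
    unfolding A by (simp add: algebra_simps)
  finally show ?thesis .
qed

definition jacobi_weight :: "real \<Rightarrow> real \<Rightarrow> real \<Rightarrow> real" where
  "jacobi_weight a b x = (1 - x) powr a * (1 + x) powr b"

definition jacobi_primitive :: "nat \<Rightarrow> real \<Rightarrow> real \<Rightarrow> real \<Rightarrow> real" where
  "jacobi_primitive m a b x = jacobi_weight (a + 1) (b + 1) x * jacobiP m (a + 1) (b + 1) x"

lemma jacobi_weight_pos: "-1 < x \<Longrightarrow> x < 1 \<Longrightarrow> jacobi_weight a b x > 0"
  by (simp add: jacobi_weight_def)

lemma jacobi_weight_Suc:
  "-1 < x \<Longrightarrow> x < 1 \<Longrightarrow> jacobi_weight (a + 1) (b + 1) x = (1 - x) * (1 + x) * jacobi_weight a b x"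
  by (simp add: jacobi_weight_def powr_add)

lemma continuous_on_jacobiP: "continuous_on S (jacobiP n a b)"
  unfolding jacobiP_def by (intro continuous_intros)

lemma continuous_on_jacobi_primitive:
  "a > -1 \<Longrightarrow> b > -1 \<Longrightarrow> continuous_on {-1..1} (jacobi_primitive m a b)"
  unfolding jacobi_primitive_def jacobi_weight_def
  by (intro continuous_intros continuous_on_powr' continuous_on_jacobiP) auto

lemma jacobi_primitive_endpoints [simp]: "jacobi_primitive m a b (-1) = 0" "jacobi_primitive m a b 1 = 0"
  by (simp_all add: jacobi_primitive_def jacobi_weight_def)

lemma has_real_derivative_jacobi_primitive:
  assumes "-1 < x" "x < 1"
  shows "(jacobi_primitive m a b has_real_derivative
           -2 * (real m + 1) * jacobi_weight a b x * jacobiP (Suc m) a b x) (at x)"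
proof -
  define c where "c = jacobi_coeff m (a + 1) (b + 1)"
  define X Y where "X = (x - 1) / 2" and "Y = (x + 1) / 2"
  have Q: "jacobiP m (a + 1) (b + 1) = (\<lambda>x. homog_sum m c ((x - 1) / 2) ((x + 1) / 2))"
    unfolding c_def by (rule ext) (rule jacobiP_eq_homog_sum)
  have "(jacobi_primitive m a b has_real_derivative
     (((a + 1) * (1 - x) powr (a + 1 - 1) * (-1)) * (1 + x) powr (b + 1)
       + ((b + 1) * (1 + x) powr (b + 1 - 1) * 1) * (1 - x) powr (a + 1)) * homog_sum m c X Y
     + homog_sum_deriv m c X Y * ((1 - x) powr (a + 1) * (1 + x) powr (b + 1))) (at x)"
    unfolding jacobi_primitive_def jacobi_weight_def Q X_def Y_def using assms
    by (intro derivative_eq_intros) (auto simp: has_real_derivative_homog_sum)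
  also have "(((a + 1) * (1 - x) powr (a + 1 - 1) * (-1)) * (1 + x) powr (b + 1)
       + ((b + 1) * (1 + x) powr (b + 1 - 1) * 1) * (1 - x) powr (a + 1)) * homog_sum m c X Y
     + homog_sum_deriv m c X Y * ((1 - x) powr (a + 1) * (1 + x) powr (b + 1))
     = -2 * jacobi_weight a b x * ((a + 1) * Y * homog_sum m c X Y + (b + 1) * X * homog_sum m c X Y
         + 2 * (X * Y * homog_sum_deriv m c X Y))"
  proof -
    have XY: "1 - x = -2 * X" "1 + x = 2 * Y" unfolding X_def Y_def by simp_all
    have "(1 - x) powr (a + 1) = (1 - x) powr a * (1 - x)" "(1 + x) powr (b + 1) = (1 + x) powr b * (1 + x)"
      using assms by (simp_all add: powr_add)
    then show ?thesis unfolding jacobi_weight_def by (simp add: XY algebra_simps)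
  qed
  also have "\<dots> = -2 * jacobi_weight a b x * ((a + 1) * Y * homog_sum m c X Y + (b + 1) * X * homog_sum m c X Y
      + Y * homog_sum m (\<lambda>k. real k * c k) X Y + X * homog_sum m (\<lambda>k. real (m - k) * c k) X Y)"
    unfolding mult_homog_sum_deriv by (simp add: field_simps)
  also have "\<dots> = -2 * (real m + 1) * jacobi_weight a b x * jacobiP (Suc m) a b x"
    unfolding c_def homog_sum_jacobi_deriv jacobiP_eq_homog_sum X_def Y_def by (simp add: algebra_simps)
  finally show ?thesis .
qed

lemma jacobiP_Suc_zero_between:
  assumes "a > -1" "b > -1" "-1 \<le> l" "l < r" "r \<le> 1"
    and "jacobi_primitive m a b l = jacobi_primitive m a b r"
  obtains z where "l < z" "z < r" "jacobiP (Suc m) a b z = 0"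
proof -
  have "{l..r} \<subseteq> {-1..1}" using assms by auto
  then have "continuous_on {l..r} (jacobi_primitive m a b)"
    using continuous_on_jacobi_primitive[OF assms(1,2)] continuous_on_subset by blast
  moreover have deriv: "(jacobi_primitive m a b has_real_derivative
      -2 * (real m + 1) * jacobi_weight a b x * jacobiP (Suc m) a b x) (at x)" if "l < x" "x < r" for x
    using that assms by (intro has_real_derivative_jacobi_primitive) auto
  ultimately obtain z where z: "l < z" "z < r" "(jacobi_primitive m a b has_real_derivative 0) (at z)"
    using Rolle[OF \<open>l < r\<close> assms(6)] real_differentiable_def by blast
  then have "-2 * (real m + 1) * jacobi_weight a b z * jacobiP (Suc m) a b z = 0"
    using DERIV_unique deriv by blast
  moreover have "jacobi_weight a b z > 0" using z assms by (intro jacobi_weight_pos) auto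
  ultimately show ?thesis using that z by simp
qed

lemma interlacing_less_Suc:
  fixes u z :: "nat \<Rightarrow> real"
  assumes "\<And>i. i \<le> n \<Longrightarrow> u i < z i \<and> z i < u (Suc i)" "i \<le> Suc n"
  defines "s \<equiv> \<lambda>i. if i = 0 then u 0 else if i \<le> Suc n then z (i - 1) else u (Suc n)"
  shows "s i < s (Suc i)"
proof (cases i)
  case (Suc j)
  with assms(2) consider "j < n" | "j = n" by fastforce
  then show ?thesis using assms(1)[of j] assms(1)[of "Suc j"] Suc by cases (auto simp: s_def)
qed (use assms(1)[of 0] in \<open>simp add: s_def\<close>)

lemma jacobiP_zeros_exist:
  assumes "a > -1" "b > -1"
  shows "\<exists>s. s 0 = -1 \<and> s (Suc n) = 1 \<and> (\<forall>i\<le>n. s i < s (Suc i))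
           \<and> (\<forall>i\<in>{1..n}. jacobiP n a b (s i) = 0)"
  using assms
proof (induction n arbitrary: a b)
  case 0
  show ?case by (rule exI[of _ "\<lambda>i. if i = 0 then -1 else 1"]) auto
next
  case (Suc n)
  obtain u where u0: "u 0 = -1" and un: "u (Suc n) = 1" and u_less: "\<forall>i\<le>n. u i < u (Suc i)"
    and u_zero: "\<forall>i\<in>{1..n}. jacobiP n (a + 1) (b + 1) (u i) = 0"
    using Suc.IH[of "a + 1" "b + 1"] Suc.prems by auto
  have u_mono: "u i \<le> u j" if "i \<le> j" "j \<le> Suc n" for i j
    by (rule lift_Suc_mono_le_ivl[of "{..n}"]) (use that u_less in \<open>auto simp: less_imp_le\<close>)
  have u_primitive: "jacobi_primitive n a b (u i) = 0" if "i \<le> Suc n" for i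
    using that u0 un u_zero by (cases "i = 0 \<or> i = Suc n") (auto simp: jacobi_primitive_def jacobi_weight_def)
  have "\<exists>z. u i < z \<and> z < u (Suc i) \<and> jacobiP (Suc n) a b z = 0" if "i \<le> n" for i
  proof -
    have "-1 \<le> u i" "u (Suc i) \<le> 1" "u i < u (Suc i)"
      using u_mono[of 0 i] u_mono[of "Suc i" "Suc n"] u0 un u_less that by auto
    moreover have "jacobi_primitive n a b (u i) = jacobi_primitive n a b (u (Suc i))"
      using u_primitive[of i] u_primitive[of "Suc i"] that by simp
    ultimately show ?thesis using jacobiP_Suc_zero_between[OF Suc.prems] by blast
  qed
  then obtain z where z: "\<And>i. i \<le> n \<Longrightarrow> u i < z i \<and> z i < u (Suc i) \<and> jacobiP (Suc n) a b (z i) = 0"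
    by metis
  let ?s = "\<lambda>i. if i = 0 then u 0 else if i \<le> Suc n then z (i - 1) else u (Suc n)"
  have "\<forall>i\<le>Suc n. ?s i < ?s (Suc i)"
    using interlacing_less_Suc[of n u z] z by blast
  moreover have "\<forall>i\<in>{1..Suc n}. jacobiP (Suc n) a b (?s i) = 0"
    using z by (auto simp: le_Suc_eq)
  ultimately show ?case using u0 un by (intro exI[of _ ?s]) auto
qed

lemma poly_sign_between_roots:
  fixes p :: "real poly" and t :: "nat \<Rightarrow> real"
  assumes "degree p = n" "lead_coeff p > 0"
    and "\<And>i j. 1 \<le> i \<Longrightarrow> i < j \<Longrightarrow> j \<le> n \<Longrightarrow> t i < t j"
    and "\<And>j. 1 \<le> j \<Longrightarrow> j \<le> n \<Longrightarrow> poly p (t j) = 0"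
    and "k \<le> n" "k = 0 \<or> t k < x" "k = n \<or> x < t (Suc k)"
  shows "(-1) ^ (k + n) * poly p x > 0"
  using assms
proof (induction n arbitrary: p k)
  case 0
  then obtain c where "p = [:c:]" using degree0_coeffs by blast
  with 0 show ?case by simp
next
  case (Suc n)
  let ?r = "t (Suc n)"
  obtain q where p: "p = [:-?r, 1:] * q"
    using Suc.prems(4)[of "Suc n"] by (auto simp: poly_eq_0_iff_dvd elim: dvdE)
  have "q \<noteq> 0" using Suc.prems(1,2) p by auto
  then have deg: "degree q = n"
    using Suc.prems(1) unfolding p by (subst (asm) degree_mult_eq) auto
  have lead: "lead_coeff q = lead_coeff p"
    unfolding p lead_coeff_mult by simp
  have roots: "poly q (t j) = 0" if "1 \<le> j" "j \<le> n" for j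
    using Suc.prems(3)[of j "Suc n"] Suc.prems(4)[of j] that p by simp
  show ?case
  proof (cases "k = Suc n")
    case True
    have "n = 0 \<or> t n < x"
      using Suc.prems(3)[of n "Suc n"] Suc.prems(6) True by (cases n) auto
    then have "poly q x > 0"
      using Suc.IH[OF deg _ _ roots, of n] lead Suc.prems(2,3) by (simp add: power_add[symmetric])
    moreover have "?r < x" using Suc.prems(6) True by simp
    ultimately show ?thesis using True p by (simp add: power_add[symmetric])
  next
    case False
    then have "k \<le> n" "x < t (Suc k)" using Suc.prems(5,7) by auto
    then have "(-1) ^ (k + n) * poly q x > 0"
      using Suc.IH[OF deg _ _ roots] lead Suc.prems(2,3,6) by simp
    moreover have "x < ?r"
      using Suc.prems(3)[of "Suc k" "Suc n"] \<open>k \<le> n\<close> \<open>x < t (Suc k)\<close> by (cases "k = n") auto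
    moreover have "(-1) ^ (k + Suc n) * poly p x = ((-1) ^ (k + n) * poly q x) * (?r - x)"
      by (simp add: p algebra_simps)
    ultimately show ?thesis by simp
  qed
qed

definition jacobi_poly :: "nat \<Rightarrow> real \<Rightarrow> real \<Rightarrow> real poly" where
  "jacobi_poly n a b = (\<Sum>j=0..n. smult (((real n + a) gchoose (n - j)) * ((real n + b) gchoose j) / 2 ^ n)
                                   ([:-1, 1:] ^ j * [:1, 1:] ^ (n - j)))"

lemma poly_jacobi_poly: "poly (jacobi_poly n a b) = jacobiP n a b"
  by (simp add: fun_eq_iff jacobi_poly_def jacobiP_def poly_sum ac_simps)

lemma degree_jacobi_poly_le: "degree (jacobi_poly n a b) \<le> n"
  unfolding jacobi_poly_def
proof (intro degree_sum_le order.trans[OF degree_smult_le])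
  fix j assume "j \<in> {0..n}"
  then show "degree ([:-1, 1:] ^ j * [:1, 1:] ^ (n - j) :: real poly) \<le> n"
    by (simp add: degree_mult_eq degree_power_eq)
qed simp

lemma coeff_jacobi_poly: "coeff (jacobi_poly n a b) n = ((2 * real n + a + b) gchoose n) / 2 ^ n"
proof -
  have lead: "coeff ([:-1, 1:] ^ j * [:1, 1:] ^ (n - j) :: real poly) n = 1" if "j \<le> n" for j
    using that lead_coeff_mult[of "[:-1, 1:] ^ j :: real poly" "[:1, 1:] ^ (n - j)"]
      lead_coeff_power[of "[:-1, 1:] :: real poly" j] lead_coeff_power[of "[:1, 1:] :: real poly" "n - j"]
    by (simp add: degree_mult_eq degree_power_eq)
  have "coeff (jacobi_poly n a b) n
      = (\<Sum>j=0..n. ((real n + b) gchoose j) * ((real n + a) gchoose (n - j))) / 2 ^ n"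
    by (simp add: jacobi_poly_def coeff_sum lead sum_divide_distrib mult.commute)
  also have "\<dots> = ((2 * real n + a + b) gchoose n) / 2 ^ n"
    by (simp add: gbinomial_Vandermonde algebra_simps)
  finally show ?thesis .
qed

lemma jacobi_poly_degree_lead_coeff:
  assumes "a > -1" "b > -1"
  shows "degree (jacobi_poly n a b) = n" "lead_coeff (jacobi_poly n a b) > 0"
proof -
  have "(2 * real n + a + b) gchoose n = pochhammer (real n + a + b + 1) n / fact n"
    by (simp add: gbinomial_pochhammer' algebra_simps)
  moreover have "pochhammer (real n + a + b + 1) n > 0"
    using assms by (cases n) (auto intro!: pochhammer_pos)
  ultimately have pos: "coeff (jacobi_poly n a b) n > 0"
    by (simp add: coeff_jacobi_poly)
  then show "degree (jacobi_poly n a b) = n"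
    using degree_jacobi_poly_le by (metis le_degree less_irrefl order_antisym)
  with pos show "lead_coeff (jacobi_poly n a b) > 0" by simp
qed

lemma jacobiP_zeros_in_interval:
  assumes "a > -1" "b > -1" "jacobiP n a b x = 0"
  shows "-1 < x \<and> x < 1"
proof -
  obtain s where s0: "s 0 = -1" and sn: "s (Suc n) = 1" and s_less_Suc: "\<forall>i\<le>n. s i < s (Suc i)"
    and s_zero: "\<forall>i\<in>{1..n}. jacobiP n a b (s i) = 0"
    using jacobiP_zeros_exist[OF assms(1,2)] by blast
  have s_less: "s i < s j" if "i < j" "j \<le> Suc n" for i j
    by (rule lift_Suc_mono_less_ivl[of "{..n}"]) (use that s_less_Suc in auto)
  have "inj_on s {1..n}"
  proof (rule inj_onI)
    fix i j assume "i \<in> {1..n}" "j \<in> {1..n}" "s i = s j"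
    then show "i = j" using s_less[of i j] s_less[of j i] by (cases i j rule: linorder_cases) auto
  qed
  then have card_s: "card (s ` {1..n}) = n" by (simp add: card_image)
  define p where "p = jacobi_poly n a b"
  have "degree p = n" "p \<noteq> 0"
    using jacobi_poly_degree_lead_coeff[OF assms(1,2), of n] by (auto simp: p_def)
  moreover have "{x. jacobiP n a b x = 0} = {x. poly p x = 0}"
    by (simp add: p_def poly_jacobi_poly)
  ultimately have "finite {x. jacobiP n a b x = 0}" "card {x. jacobiP n a b x = 0} \<le> n"
    using poly_roots_finite[of p] card_poly_roots_bound[of p] by simp_all
  moreover have "s ` {1..n} \<subseteq> {x. jacobiP n a b x = 0}" using s_zero by auto
  ultimately have "s ` {1..n} = {x. jacobiP n a b x = 0}"
    using card_s by (intro card_seteq) simp_all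
  then obtain i where "i \<in> {1..n}" "x = s i" using assms(3) by blast
  then show ?thesis using s_less[of 0 i] s_less[of i "Suc n"] s0 sn by auto
qed

lemma has_integral_abs_of_sign:
  fixes f F :: "real \<Rightarrow> real"
  assumes "l \<le> r" "continuous_on {l..r} F"
    and "\<And>x. l < x \<Longrightarrow> x < r \<Longrightarrow> (F has_real_derivative f x) (at x)"
    and "\<bar>s\<bar> = 1" "\<And>x. l < x \<Longrightarrow> x < r \<Longrightarrow> s * f x \<ge> 0"
  shows "((\<lambda>x. \<bar>f x\<bar>) has_integral s * (F r - F l)) {l..r}"
proof -
  have "(f has_integral F r - F l) {l..r}"
    using assms(1-3) by (intro fundamental_theorem_of_calculus_interior)
      (auto simp: has_real_derivative_iff_has_vector_derivative[symmetric])
  then have "((\<lambda>x. s * f x) has_integral s * (F r - F l)) {l..r}"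
    by (rule has_integral_mult_right)
  then show ?thesis
  proof (rule has_integral_spike_finite[where S = "{l, r}", rotated 2])
    fix x assume "x \<in> {l..r} - {l, r}"
    then have "s * f x \<ge> 0" using assms(5) by auto
    moreover have "\<bar>s * f x\<bar> = \<bar>f x\<bar>" using assms(4) by (simp add: abs_mult)
    ultimately show "\<bar>f x\<bar> = s * f x" by simp
  qed simp
qed

lemma has_integral_partition:
  fixes f :: "real \<Rightarrow> real"
  assumes "\<And>k. k \<le> n \<Longrightarrow> v k \<le> v (Suc k)"
    and "\<And>k. k \<le> n \<Longrightarrow> (f has_integral I k) {v k..v (Suc k)}"
  shows "(f has_integral (\<Sum>k=0..n. I k)) {v 0..v (Suc n)}"
  using assms
proof (induction n)
  case (Suc n)
  have "v 0 \<le> v (Suc n)"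
    by (rule lift_Suc_mono_le_ivl[of "{..n}"]) (use Suc.prems(1) in auto)
  then show ?case
    using has_integral_combine[OF _ Suc.prems(1)[of "Suc n"] Suc.IH Suc.prems(2)[of "Suc n"]] Suc.prems by simp
qed simp

lemma sum_alternating_diff:
  fixes g :: "nat \<Rightarrow> 'a::comm_ring_1"
  assumes "g 0 = 0" "g (Suc n) = 0"
  shows "(\<Sum>k=0..n. (-1) ^ (k + n) * (g (Suc k) - g k)) = -2 * (\<Sum>k=1..n. (-1) ^ (k + n) * g k)"
proof -
  define h where "h k = (-1) ^ (k + n) * g k" for k
  have "(\<Sum>k=0..n. (-1) ^ (k + n) * (g (Suc k) - g k)) = - (\<Sum>k=0..n. h (Suc k)) - (\<Sum>k=0..n. h k)"
    by (simp add: h_def sum_subtractf sum_negf right_diff_distrib)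
  also have "(\<Sum>k=0..n. h (Suc k)) = (\<Sum>k=1..n. h k)"
    using sum.shift_bounds_cl_Suc_ivl[of h 0 n] assms(2) by (simp add: h_def)
  also have "(\<Sum>k=0..n. h k) = (\<Sum>k=1..n. h k)"
    using sum.atLeast_Suc_atMost[of 0 n h] assms(1) by (simp add: h_def)
  finally show ?thesis by (simp add: h_def)
qed

lemma has_integral_abs_alternating:
  fixes f F t :: "_ \<Rightarrow> real"
  assumes "l < r"
    and t_less: "\<And>i j. 1 \<le> i \<Longrightarrow> i < j \<Longrightarrow> j \<le> n \<Longrightarrow> t i < t j"
    and t_in: "\<And>k. 1 \<le> k \<Longrightarrow> k \<le> n \<Longrightarrow> l < t k \<and> t k < r"
    and cont: "continuous_on {l..r} F"
    and deriv: "\<And>x. l < x \<Longrightarrow> x < r \<Longrightarrow> (F has_real_derivative f x) (at x)"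
    and sign: "\<And>k x. k \<le> n \<Longrightarrow> k = 0 \<or> t k < x \<Longrightarrow> k = n \<or> x < t (Suc k) \<Longrightarrow> l < x \<Longrightarrow> x < r
                 \<Longrightarrow> (-1) ^ (k + n) * f x \<ge> 0"
    and "F l = 0" "F r = 0"
  shows "((\<lambda>x. \<bar>f x\<bar>) has_integral -2 * (\<Sum>k=1..n. (-1) ^ (k + n) * F (t k))) {l..r}"
proof -
  define v where "v k = (if k = 0 then l else if k \<le> n then t k else r)" for k
  have v_less: "v k < v (Suc k)" if "k \<le> n" for k
    using that \<open>l < r\<close> t_in[of k] t_in[of "Suc k"] t_less[of k "Suc k"] by (auto simp: v_def)
  have v_in: "l \<le> v k \<and> v k \<le> r" if "k \<le> Suc n" for k
    using that \<open>l < r\<close> t_in[of k] by (auto simp: v_def)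
  have "((\<lambda>x. \<bar>f x\<bar>) has_integral (-1) ^ (k + n) * (F (v (Suc k)) - F (v k))) {v k..v (Suc k)}"
    if k: "k \<le> n" for k
  proof (rule has_integral_abs_of_sign)
    have "{v k..v (Suc k)} \<subseteq> {l..r}" using v_in[of k] v_in[of "Suc k"] k by auto
    then show "continuous_on {v k..v (Suc k)} F" using cont continuous_on_subset by blast
    fix x assume x: "v k < x" "x < v (Suc k)"
    then have "l < x" "x < r" using v_in[of k] v_in[of "Suc k"] k by auto
    then show "(F has_real_derivative f x) (at x)" by (rule deriv)
    show "(-1) ^ (k + n) * f x \<ge> 0"
      using sign[OF k _ _ \<open>l < x\<close> \<open>x < r\<close>] x k by (auto simp: v_def split: if_splits)
  qed (use v_less[OF k] in auto)
  then have "((\<lambda>x. \<bar>f x\<bar>) has_integral (\<Sum>k=0..n. (-1) ^ (k + n) * (F (v (Suc k)) - F (v k))))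
      {v 0..v (Suc n)}"
    using v_less by (intro has_integral_partition) (auto intro: less_imp_le)
  also have "(\<Sum>k=0..n. (-1) ^ (k + n) * (F (v (Suc k)) - F (v k))) = -2 * (\<Sum>k=1..n. (-1) ^ (k + n) * F (v k))"
    using sum_alternating_diff[of "F \<circ> v" n] assms(7,8) by (simp add: v_def)
  also have "(\<Sum>k=1..n. (-1) ^ (k + n) * F (v k)) = (\<Sum>k=1..n. (-1) ^ (k + n) * F (t k))"
    by (rule sum.cong) (auto simp: v_def)
  finally show ?thesis by (simp add: v_def)
qed

definition jacobi_norm :: "nat \<Rightarrow> real \<Rightarrow> real \<Rightarrow> real" where
  "jacobi_norm n a b = (2 * real n + a + b + 1) * Gamma (real n + a + b + 1) * fact n
                       / (2 powr (a + b + 1) * Gamma (real n + a + 1) * Gamma (real n + b + 1))"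

lemma jacobi_fun_eq: "jacobi_fun n a b x = jacobi_norm n a b * jacobi_weight a b x * jacobiP n a b x"
  by (simp add: jacobi_fun_def jacobi_norm_def jacobi_weight_def)

lemma jacobi_norm_pos: "a > -1 \<Longrightarrow> b > -1 \<Longrightarrow> n \<ge> 1 \<Longrightarrow> jacobi_norm n a b > 0"
  unfolding jacobi_norm_def by (intro divide_pos_pos mult_pos_pos Gamma_real_pos) auto

(* For m = 0 the last hypothesis excludes a + b + 1 = 0, a pole of Gamma (where Gamma returns 0). *)
lemma jacobi_norm_Suc:
  assumes "a > -1" "b > -1" "2 * real m + a + b + 1 \<noteq> 0"
  shows "jacobi_norm (Suc m) a b
           = (2 * real m + a + b + 3) * (real m + a + b + 1) * (real m + 1)
             / ((2 * real m + a + b + 1) * (real m + a + 1) * (real m + b + 1)) * jacobi_norm m a b"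
proof -
  have Gamma_Suc: "Gamma (z + 1) = z * Gamma z" if "z > -1" "z \<noteq> 0" for z :: real
    using that by (intro Gamma_plus1) (auto elim!: nonpos_Ints_cases)
  have "real m + a + b + 1 \<noteq> 0" using assms by (cases m) auto
  then have G: "Gamma (real (Suc m) + a + b + 1) = (real m + a + b + 1) * Gamma (real m + a + b + 1)"
      "Gamma (real (Suc m) + a + 1) = (real m + a + 1) * Gamma (real m + a + 1)"
      "Gamma (real (Suc m) + b + 1) = (real m + b + 1) * Gamma (real m + b + 1)"
    using Gamma_Suc[of "real m + a + b + 1"] Gamma_Suc[of "real m + a + 1"] Gamma_Suc[of "real m + b + 1"] assms
    by (simp_all add: algebra_simps)
  define K where
    "K = Gamma (real m + a + b + 1) * fact m / (2 powr (a + b + 1) * Gamma (real m + a + 1) * Gamma (real m + b + 1))"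
  define r where "r = (2 * real m + a + b + 3) * (real m + a + b + 1) * (real m + 1) / ((real m + a + 1) * (real m + b + 1))"
  have norm_m: "jacobi_norm m a b = (2 * real m + a + b + 1) * K"
    unfolding jacobi_norm_def K_def by (simp only: times_divide_eq_right mult.assoc)
  have "jacobi_norm (Suc m) a b
      = (2 * real m + a + b + 3) * ((real m + a + b + 1) * Gamma (real m + a + b + 1)) * ((real m + 1) * fact m)
        / (2 powr (a + b + 1) * ((real m + a + 1) * Gamma (real m + a + 1)) * ((real m + b + 1) * Gamma (real m + b + 1)))"
    unfolding jacobi_norm_def G by (simp add: algebra_simps)
  also have "\<dots> = r * K"
    unfolding r_def K_def by (simp only: times_divide_times_eq; simp only: ac_simps)
  finally show ?thesis
    unfolding norm_m r_def using assms(3) by simp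
qed

definition jacobi_l1_factor :: "nat \<Rightarrow> real \<Rightarrow> real \<Rightarrow> real" where
  "jacobi_l1_factor n a b = (4 / (real n + a + b + 1)) * ((real n + a + b) / (2 * real n + a + b))
                            * ((2 * real n + a + b + 1) / (2 * real n + a + b - 1))"

lemma jacobi_l1_factor_Suc:
  assumes "a > -1" "b > -1" "2 * real m + a + b + 1 \<noteq> 0"
  shows "jacobi_norm (Suc m) a b / (real m + 1) * (4 * (real m + 1 + a) * (real m + 1 + b))
           = jacobi_l1_factor (Suc m) a b * jacobi_norm m a b * ((real m + a + b + 2) * (2 * real m + a + b + 2))"
proof -
  define A B C E U V W where "A = real m + a + b + 2" and "B = real m + a + b + 1"
    and "C = 2 * real m + a + b + 2" and "E = 2 * real m + a + b + 1"
    and "U = real m + a + 1" and "V = real m + b + 1" and "W = real m + 1"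
  have nonzero: "A \<noteq> 0" "C \<noteq> 0" "E \<noteq> 0" "U \<noteq> 0" "V \<noteq> 0" "W \<noteq> 0"
    using assms by (auto simp: A_def C_def E_def U_def V_def W_def)
  have norm: "jacobi_norm (Suc m) a b = (E + 2) * B * W / (E * U * V) * jacobi_norm m a b"
    unfolding jacobi_norm_Suc[OF assms] B_def E_def U_def V_def W_def by (simp add: algebra_simps)
  have factor: "jacobi_l1_factor (Suc m) a b = 4 / A * (B / C) * ((E + 2) / E)"
    unfolding jacobi_l1_factor_def A_def B_def C_def E_def by (simp add: algebra_simps)
  have AC: "real m + a + b + 2 = A" "2 * real m + a + b + 2 = C" and UV: "W + a = U" "W + b = V"
    by (simp_all add: U_def V_def W_def A_def C_def algebra_simps)
  show ?thesis
    unfolding norm factor AC W_def[symmetric] UV using nonzero by (simp add: field_simps)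
qed

definition jacobi_fun_antider :: "nat \<Rightarrow> real \<Rightarrow> real \<Rightarrow> real \<Rightarrow> real" where
  "jacobi_fun_antider m a b x = - jacobi_norm (Suc m) a b / (2 * (real m + 1)) * jacobi_primitive m a b x"

lemma has_real_derivative_jacobi_fun_antider:
  assumes "-1 < x" "x < 1"
  shows "(jacobi_fun_antider m a b has_real_derivative jacobi_fun (Suc m) a b x) (at x)"
proof -
  have "(jacobi_fun_antider m a b has_real_derivative
      - jacobi_norm (Suc m) a b / (2 * (real m + 1)) * (-2 * (real m + 1) * jacobi_weight a b x * jacobiP (Suc m) a b x)) (at x)"
    unfolding jacobi_fun_antider_def[abs_def] using assms by (intro DERIV_cmult has_real_derivative_jacobi_primitive)
  moreover have "- jacobi_norm (Suc m) a b / (2 * (real m + 1)) * (-2 * (real m + 1) * jacobi_weight a b x * jacobiP (Suc m) a b x)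
      = jacobi_fun (Suc m) a b x"
    unfolding jacobi_fun_eq by (simp add: field_simps)
  ultimately show ?thesis by simp
qed

lemma continuous_on_jacobi_fun_antider:
  "a > -1 \<Longrightarrow> b > -1 \<Longrightarrow> continuous_on {-1..1} (jacobi_fun_antider m a b)"
  unfolding jacobi_fun_antider_def[abs_def] by (intro continuous_on_mult_left continuous_on_jacobi_primitive)

lemma jacobi_fun_antider_endpoints [simp]: "jacobi_fun_antider m a b (-1) = 0" "jacobi_fun_antider m a b 1 = 0"
  by (simp_all add: jacobi_fun_antider_def)

lemma jacobi_fun_antider_at_zero:
  assumes "a > -1" "b > -1" "2 * real m + a + b + 1 \<noteq> 0"
    and "-1 < x" "x < 1" "jacobiP (Suc m) a b x = 0"
  shows "-2 * jacobi_fun_antider m a b x = jacobi_l1_factor (Suc m) a b * jacobi_fun m a b x"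
proof -
  have scaled: "-2 * jacobi_fun_antider m a b x = jacobi_norm (Suc m) a b / (real m + 1) * jacobi_primitive m a b x"
    by (simp add: jacobi_fun_antider_def field_simps add_nonneg_pos)
  define D where "D = (real m + a + b + 2) * (2 * real m + a + b + 2)"
  have "D \<noteq> 0" using assms(1,2) by (simp add: D_def)
  have "D * (jacobi_norm (Suc m) a b / (real m + 1) * jacobi_primitive m a b x)
      = jacobi_norm (Suc m) a b / (real m + 1) * jacobi_weight a b x
          * (D * ((1 - x) * (1 + x) * jacobiP m (a + 1) (b + 1) x))"
    unfolding jacobi_primitive_def jacobi_weight_Suc[OF assms(4,5)] by (simp only: ac_simps)
  also have "\<dots> = jacobi_norm (Suc m) a b / (real m + 1) * (4 * (real m + 1 + a) * (real m + 1 + b))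
          * (jacobi_weight a b x * jacobiP m a b x)"
    using jacobiP_shift_at_zero_of_Suc[OF assms(6)] by (simp add: D_def algebra_simps)
  also have "\<dots> = D * (jacobi_l1_factor (Suc m) a b * jacobi_fun m a b x)"
    unfolding jacobi_l1_factor_Suc[OF assms(1-3)] jacobi_fun_eq D_def by (simp only: ac_simps)
  finally show ?thesis using \<open>D \<noteq> 0\<close> scaled by (simp only: mult_cancel_left simp_thms)
qed

lemma jacobi_fun_sign_between_zeros:
  assumes "a > -1" "b > -1" "n \<ge> 1"
    and "\<And>i j. 1 \<le> i \<Longrightarrow> i < j \<Longrightarrow> j \<le> n \<Longrightarrow> t i < t j"
    and "\<And>j. 1 \<le> j \<Longrightarrow> j \<le> n \<Longrightarrow> jacobiP n a b (t j) = 0"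
    and "-1 < x" "x < 1" "k \<le> n" "k = 0 \<or> t k < x" "k = n \<or> x < t (Suc k)"
  shows "(-1) ^ (k + n) * jacobi_fun n a b x > 0"
proof -
  have "(-1) ^ (k + n) * jacobiP n a b x > 0"
    using poly_sign_between_roots[of "jacobi_poly n a b" n t k x] assms
      jacobi_poly_degree_lead_coeff[OF assms(1,2)] by (simp add: poly_jacobi_poly)
  moreover have "jacobi_norm n a b * jacobi_weight a b x > 0"
    using assms by (simp add: jacobi_norm_pos jacobi_weight_pos)
  ultimately show ?thesis
    unfolding jacobi_fun_eq by (metis mult.left_commute mult_pos_pos)
qed

theorem corollary4p7:
  fixes a b :: real and n :: nat and t :: "nat \<Rightarrow> real"
  assumes "a > -1" and "b > -1" and "n \<ge> 1"
    and "2 * real n + a + b - 1 \<noteq> 0"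
    and "\<And>i j. 1 \<le> i \<Longrightarrow> i < j \<Longrightarrow> j \<le> n \<Longrightarrow> t i < t j"
    and "{x. jacobiP n a b x = 0} = t ` {1..n}"
  shows "((\<lambda>x. \<bar>jacobi_fun n a b x\<bar>) has_integral
           (4 / (real n + a + b + 1)) * ((real n + a + b) / (2 * real n + a + b))
           * ((2 * real n + a + b + 1) / (2 * real n + a + b - 1))
           * (\<Sum>m=1..n. (-1) ^ (m + n) * jacobi_fun (n - 1) a b (t m))) {-1..1}"
proof -
  obtain m where n: "n = Suc m" using assms(3) by (cases n) auto
  have zero: "jacobiP n a b (t k) = 0" if "1 \<le> k" "k \<le> n" for k
    using assms(6) that by auto
  have t_in: "-1 < t k \<and> t k < 1" if "1 \<le> k" "k \<le> n" for k
    using jacobiP_zeros_in_interval[OF assms(1,2) zero[OF that]] .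
  have "((\<lambda>x. \<bar>jacobi_fun n a b x\<bar>) has_integral
          -2 * (\<Sum>k=1..n. (-1) ^ (k + n) * jacobi_fun_antider m a b (t k))) {-1..1}"
  proof (rule has_integral_abs_alternating[OF _ assms(5) t_in])
    show "(-1) ^ (k + n) * jacobi_fun n a b x \<ge> 0"
      if "k \<le> n" "k = 0 \<or> t k < x" "k = n \<or> x < t (Suc k)" "-1 < x" "x < 1" for k x
      using jacobi_fun_sign_between_zeros[where t = t, OF assms(1-3,5) zero that(4,5,1-3)] by simp
  qed (auto simp: n continuous_on_jacobi_fun_antider assms(1,2) has_real_derivative_jacobi_fun_antider)
  also have "-2 * (\<Sum>k=1..n. (-1) ^ (k + n) * jacobi_fun_antider m a b (t k))
      = jacobi_l1_factor n a b * (\<Sum>k=1..n. (-1) ^ (k + n) * jacobi_fun (n - 1) a b (t k))"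
    unfolding sum_distrib_left
  proof (rule sum.cong)
    fix k assume "k \<in> {1..n}"
    then have "-2 * jacobi_fun_antider m a b (t k) = jacobi_l1_factor n a b * jacobi_fun (n - 1) a b (t k)"
      using jacobi_fun_antider_at_zero[OF assms(1,2), of m "t k"] assms(4) zero t_in by (simp add: n algebra_simps)
    then show "-2 * ((-1) ^ (k + n) * jacobi_fun_antider m a b (t k))
        = jacobi_l1_factor n a b * ((-1) ^ (k + n) * jacobi_fun (n - 1) a b (t k))"
      by (metis mult.left_commute)
  qed simp
  finally show ?thesis
    unfolding jacobi_l1_factor_def .
qed

end
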